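(* Let $k$ be a commutative ring, $R$ a reduced (not necessarily commutative) $k$-algebra and $\overline R=(R,\Gamma,\{R_\gamma\}_{\gamma\in\Gamma})$ a grid-grading of $R$ such that $X=\{\gamma\in\Gamma: R_\gamma\neq 0\}$ is finite. Then: (1) for each $\gamma\in X$, the subgrid $\langle\gamma\rangle$ of $\Gamma$ generated by $\gamma$ is contained in $X$ and is a finite cyclic group; (2) if $R_1$ is a domain, then for every $\gamma\in\Gamma$ every nonzero $x\in R_\gamma$ is regular (i.e. $xy=0$ or $yx=0$ implies $y=0$), and $X=\langle X\rangle$ is a group (under the restriction of $*$); if moreover $R$ is commutative, this group is abelian; (3) if $R_1$ is a field, then for every $\gamma\in\Gamma$ every nonzero $x\in R_\gamma$ is invertible in $R$ with $x^{-1}\in R_{\gamma^{-1}}$, and $\dim_{R_1}R_\gamma=1$ for all $\gamma\in X$ (viewing $R_\gamma$ as a left $R_1$-module).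
   Context: A grid is a quadruple $G=(S,1,D,* )$ where $S$ is a set containing $1$, $D\subseteq S^2$ contains $(1,s),(s,1)$ for all $s$, $*:D\to S$ satisfies $s*1=1*s=s$, and $s*s=s$ implies $s=1$. A subgrid of $G$ is a grid $(T,1,E,\star)$ with $T\subseteq S$, $E=D\cap T^2$ and $\star=*|_E$; $\langle Y\rangle$ denotes the smallest subgrid containing $Y\subseteq S$. A grid-grading of a $k$-algebra $R$ is a triple $(R,G,\{R_g\}_{g\in G})$ with $\{R_g\}$ a family of $k$-submodules such that $\bigoplus_g R_g\to R$ is an isomorphism, $1\in R_1$, and whenever $R_gR_h\ne0$ the product $g*h$ is defined and $R_gR_h\subseteq R_{g*h}$. $R_1$ is then a subalgebra. Reduced means no nonzero nilpotent elements. *)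

theory Defs
  imports "HOL-Algebra.Generated_Groups"
begin

text \<open>Grid (S, e, D, op): the partial operation is a total HOL function op, meaningful on D.\<close>
definition grid :: "'g set \<Rightarrow> 'g \<Rightarrow> ('g \<times> 'g) set \<Rightarrow> ('g \<Rightarrow> 'g \<Rightarrow> 'g) \<Rightarrow> bool" where
  "grid S e D op \<longleftrightarrow> e \<in> S \<and> D \<subseteq> S \<times> S
     \<and> (\<forall>s\<in>S. (e, s) \<in> D \<and> (s, e) \<in> D \<and> op s e = s \<and> op e s = s)
     \<and> (\<forall>(a, b)\<in>D. op a b \<in> S)
     \<and> (\<forall>s\<in>S. (s, s) \<in> D \<and> op s s = s \<longrightarrow> s = e)"

definition subgrid :: "'g set \<Rightarrow> 'g \<Rightarrow> ('g \<times> 'g) set \<Rightarrow> ('g \<Rightarrow> 'g \<Rightarrow> 'g) \<Rightarrow> 'g set \<Rightarrow> bool" where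
  "subgrid S e D op T \<longleftrightarrow> T \<subseteq> S \<and> grid T e (D \<inter> (T \<times> T)) op"

definition grid_gen :: "'g set \<Rightarrow> 'g \<Rightarrow> ('g \<times> 'g) set \<Rightarrow> ('g \<Rightarrow> 'g \<Rightarrow> 'g) \<Rightarrow> 'g set \<Rightarrow> 'g set" where
  "grid_gen S e D op Y = \<Inter> {T. subgrid S e D op T \<and> Y \<subseteq> T}"

definition grid_monoid :: "'g \<Rightarrow> ('g \<Rightarrow> 'g \<Rightarrow> 'g) \<Rightarrow> 'g set \<Rightarrow> 'g monoid" where
  "grid_monoid e op T = \<lparr>carrier = T, mult = op, one = e\<rparr>"

definition grid_group :: "'g \<Rightarrow> ('g \<times> 'g) set \<Rightarrow> ('g \<Rightarrow> 'g \<Rightarrow> 'g) \<Rightarrow> 'g set \<Rightarrow> bool" where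
  "grid_group e D op T \<longleftrightarrow> T \<times> T \<subseteq> D \<and> group (grid_monoid e op T)"

definition finite_cyclic_grid_group :: "'g \<Rightarrow> ('g \<times> 'g) set \<Rightarrow> ('g \<Rightarrow> 'g \<Rightarrow> 'g) \<Rightarrow> 'g set \<Rightarrow> bool" where
  "finite_cyclic_grid_group e D op T \<longleftrightarrow> finite T \<and> grid_group e D op T
     \<and> (\<exists>g\<in>T. T = generate (grid_monoid e op T) {g})"

definition k_algebra :: "('k::comm_ring_1 \<Rightarrow> 'r::ring_1 \<Rightarrow> 'r) \<Rightarrow> bool" where
  "k_algebra sm \<longleftrightarrow>
     (\<forall>a b x. sm (a + b) x = sm a x + sm b x)
   \<and> (\<forall>a x y. sm a (x + y) = sm a x + sm a y)
   \<and> (\<forall>a b x. sm (a * b) x = sm a (sm b x))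
   \<and> (\<forall>x. sm 1 x = x)
   \<and> (\<forall>a x y. sm a (x * y) = sm a x * y \<and> sm a (x * y) = x * sm a y)"

definition k_submodule :: "('k \<Rightarrow> 'r::ring_1 \<Rightarrow> 'r) \<Rightarrow> 'r set \<Rightarrow> bool" where
  "k_submodule sm M \<longleftrightarrow> 0 \<in> M \<and> (\<forall>x\<in>M. \<forall>y\<in>M. x + y \<in> M) \<and> (\<forall>a. \<forall>x\<in>M. sm a x \<in> M)"

definition reduced :: "'r::ring_1 itself \<Rightarrow> bool" where
  "reduced _ \<longleftrightarrow> (\<forall>x::'r. \<forall>n::nat. x ^ n = 0 \<longrightarrow> x = 0)"

text \<open>The canonical map from the external direct sum to R is bijective.\<close>
definition internal_direct_sum :: "'g set \<Rightarrow> ('g \<Rightarrow> 'r::ring_1 set) \<Rightarrow> bool" where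
  "internal_direct_sum Gam Rg \<longleftrightarrow>
    (\<forall>x::'r. \<exists>!c::'g \<Rightarrow> 'r. (\<forall>g. g \<notin> Gam \<longrightarrow> c g = 0) \<and> finite {g. c g \<noteq> 0}
        \<and> (\<forall>g\<in>Gam. c g \<in> Rg g) \<and> x = (\<Sum>g\<in>{g. c g \<noteq> 0}. c g))"

definition grid_grading ::
  "('k::comm_ring_1 \<Rightarrow> 'r::ring_1 \<Rightarrow> 'r) \<Rightarrow> 'g set \<Rightarrow> 'g \<Rightarrow> ('g \<times> 'g) set \<Rightarrow> ('g \<Rightarrow> 'g \<Rightarrow> 'g)
    \<Rightarrow> ('g \<Rightarrow> 'r set) \<Rightarrow> bool" where
  "grid_grading sm Gam e D op Rg \<longleftrightarrow> grid Gam e D op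
     \<and> (\<forall>g\<in>Gam. k_submodule sm (Rg g))
     \<and> internal_direct_sum Gam Rg
     \<and> 1 \<in> Rg e
     \<and> (\<forall>g\<in>Gam. \<forall>h\<in>Gam. (\<exists>a\<in>Rg g. \<exists>b\<in>Rg h. a * b \<noteq> 0) \<longrightarrow>
          (g, h) \<in> D \<and> (\<forall>a\<in>Rg g. \<forall>b\<in>Rg h. a * b \<in> Rg (op g h)))"

definition domain_sub :: "'r::ring_1 set \<Rightarrow> bool" where
  "domain_sub A \<longleftrightarrow> (1::'r) \<noteq> 0 \<and> (\<forall>a\<in>A. \<forall>b\<in>A. a * b = 0 \<longrightarrow> a = 0 \<or> b = 0)"

definition field_sub :: "'r::ring_1 set \<Rightarrow> bool" where
  "field_sub A \<longleftrightarrow> (1::'r) \<noteq> 0 \<and> (\<forall>a\<in>A. \<forall>b\<in>A. a * b = b * a)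
     \<and> (\<forall>a\<in>A. a \<noteq> 0 \<longrightarrow> (\<exists>b\<in>A. a * b = 1))"

end

(*
  For a nonzero homogeneous x of degree g in a reduced ring, all powers x^n are nonzero, so by
  uniqueness of degrees the powers g^n are defined, satisfy g^(a+b) = g^a g^b and lie in the
  support X.  As X is finite, some g^m is idempotent, hence the unit 1 of the grid; so <g> is the
  finite cyclic group of powers of g, and x^m is a nonzero element of R_1.
  If R_1 is a domain, two nonzero homogeneous elements have a nonzero product, since a product of
  suitable powers of them is a nonzero product in R_1.  Multiplication by a nonzero z in R_1 then
  preserves every R_h and is injective on it, hence on R by the direct sum decomposition; applied to
  z = x^m this makes every nonzero homogeneous x regular.  Degrees therefore multiply, X is closed
  under the grid operation, which is associative there, and g^(m-1) inverts g.  If R_1 is a field,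
  x^(m-1) (x^m)^-1 inverts x and has degree g^-1, and any nonzero b spans R_g over R_1.
*)
theory Submission
  imports Defs "HOL.Modules"
begin

lemma grid_monoid_simps [simp]:
  "carrier (grid_monoid e op T) = T"
  "x \<otimes>\<^bsub>grid_monoid e op T\<^esub> y = op x y"
  "\<one>\<^bsub>grid_monoid e op T\<^esub> = e"
  by (simp_all add: grid_monoid_def)

lemma grid_monoid_groupI:
  assumes closed: "\<And>x y. x \<in> T \<Longrightarrow> y \<in> T \<Longrightarrow> op x y \<in> T"
    and one: "e \<in> T"
    and assoc: "\<And>x y z. x \<in> T \<Longrightarrow> y \<in> T \<Longrightarrow> z \<in> T \<Longrightarrow> op (op x y) z = op x (op y z)"
    and left_one: "\<And>x. x \<in> T \<Longrightarrow> op e x = x"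
    and left_inverse: "\<And>x. x \<in> T \<Longrightarrow> \<exists>y\<in>T. op y x = e"
  shows "group (grid_monoid e op T)"
  by (rule groupI) (simp_all add: assms)

lemma subgridI:
  assumes "grid S e D op" "T \<subseteq> S" "e \<in> T"
    and closed: "\<And>a b. a \<in> T \<Longrightarrow> b \<in> T \<Longrightarrow> (a, b) \<in> D \<Longrightarrow> op a b \<in> T"
  shows "subgrid S e D op T"
  using assms unfolding subgrid_def grid_def by blast

lemma subgridD:
  assumes "subgrid S e D op T"
  shows subgrid_one: "e \<in> T"
    and subgrid_closed: "\<And>a b. a \<in> T \<Longrightarrow> b \<in> T \<Longrightarrow> (a, b) \<in> D \<Longrightarrow> op a b \<in> T"
  using assms unfolding subgrid_def grid_def by blast+

lemma grid_gen_eqI: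
  assumes "subgrid S e D op T" "Y \<subseteq> T"
    and "\<And>U. subgrid S e D op U \<Longrightarrow> Y \<subseteq> U \<Longrightarrow> T \<subseteq> U"
  shows "grid_gen S e D op Y = T"
  unfolding grid_gen_def using assms by blast

fun grid_pow :: "('g \<Rightarrow> 'g \<Rightarrow> 'g) \<Rightarrow> 'g \<Rightarrow> 'g \<Rightarrow> nat \<Rightarrow> 'g" where
  "grid_pow op e g 0 = e"
| "grid_pow op e g (Suc n) = op (grid_pow op e g n) g"

lemma finite_range_hom_idempotent:
  fixes f :: "nat \<Rightarrow> 'g"
  assumes hom: "\<And>a b. f (a + b) = op (f a) (f b)" and fin: "finite (range f)"
  shows "\<exists>m>0. op (f m) (f m) = f m"
proof -
  have "\<not> inj f" using fin finite_imageD[of f UNIV] by auto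
  then obtain a b where ab: "a < b" "f a = f b"
    unfolding inj_def by (metis linorder_neqE_nat)
  define q where "q = b - a"
  have shift: "f (n + q) = f n" if "a \<le> n" for n
  proof -
    have "n + q = b + (n - a)" using that ab by (simp add: q_def)
    then have "f (n + q) = op (f b) (f (n - a))" by (simp add: hom)
    also have "\<dots> = f n" using that ab hom[of a "n - a"] by simp
    finally show ?thesis .
  qed
  have shifts: "f (n + j * q) = f n" if "a \<le> n" for n j
  proof (induction j)
    case (Suc j)
    have "f (n + Suc j * q) = f (n + j * q + q)" by (simp add: ac_simps)
    with Suc that show ?case by (simp add: shift)
  qed simp
  define m where "m = (a + 1) * q"
  have "0 < q" using ab by (simp add: q_def)
  then have "a \<le> m" using mult_le_mono2[of 1 q "a + 1"] by (simp add: m_def)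
  then have "0 < m" "f (m + m) = f m" using \<open>0 < q\<close> shifts[of m "a + 1"] by (simp_all add: m_def)
  then show ?thesis using hom by metis
qed

lemma group_range_periodic_hom:
  fixes f :: "nat \<Rightarrow> 'g"
  assumes hom: "\<And>a b. f (a + b) = op (f a) (f b)" and zero: "f 0 = e"
    and period: "0 < m" "f m = e"
  shows "group (grid_monoid e op (range f))"
proof (rule grid_monoid_groupI)
  have multiple: "f (m * c) = e" for c
  proof (induction c)
    case (Suc c)
    have "f (m * Suc c) = op (f (m * c)) (f m)" by (simp add: hom[symmetric] add.commute)
    also have "\<dots> = op (f 0) (f 0)" using Suc period by (simp add: zero)
    finally show ?case by (metis hom zero add_0)
  qed (simp add: zero)
  show "\<exists>y\<in>range f. op y x = e" if x: "x \<in> range f" for x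
  proof -
    obtain a where "x = f a" using x by blast
    then have "op (f (m * a - a)) x = f (m * a - a + a)" by (simp add: hom)
    also have "\<dots> = e" using \<open>0 < m\<close> multiple by simp
    finally show ?thesis by blast
  qed
qed (auto simp: hom[symmetric] add.assoc zero[symmetric] simp del: zero)

lemma finite_cyclic_grid_group_range:
  fixes f :: "nat \<Rightarrow> 'g"
  assumes hom: "\<And>a b. f (a + b) = op (f a) (f b)" and zero: "f 0 = e"
    and period: "0 < m" "f m = e"
    and "finite (range f)" "range f \<times> range f \<subseteq> D"
  shows "finite_cyclic_grid_group e D op (range f)"
proof -
  let ?G = "grid_monoid e op (range f)"
  have group: "group ?G" using group_range_periodic_hom[OF hom zero period] .
  have "f n \<in> generate ?G {f 1}" for n
  proof (induction n)
    case 0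
    show ?case using generate.one[of ?G "{f 1}"] by (simp add: zero)
  next
    case (Suc n)
    then show ?case
      using generate.eng[OF Suc generate.incl[of "f 1" "{f 1}" ?G]] by (simp add: hom[symmetric])
  qed
  then have "generate ?G {f 1} = range f"
    using group.generate_incl[OF group, of "{f 1}"] by auto
  then show ?thesis
    using assms group unfolding finite_cyclic_grid_group_def grid_group_def by blast
qed

definition graded_decomposition :: "'g set \<Rightarrow> ('g \<Rightarrow> 'r::ring_1 set) \<Rightarrow> ('g \<Rightarrow> 'r) \<Rightarrow> 'r \<Rightarrow> bool" where
  "graded_decomposition Gam Rg c x \<longleftrightarrow> (\<forall>g. g \<notin> Gam \<longrightarrow> c g = 0) \<and> finite {g. c g \<noteq> 0}
     \<and> (\<forall>g\<in>Gam. c g \<in> Rg g) \<and> x = (\<Sum>g\<in>{g. c g \<noteq> 0}. c g)"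

lemma internal_direct_sum_iff:
  "internal_direct_sum Gam Rg \<longleftrightarrow> (\<forall>x. \<exists>!c. graded_decomposition Gam Rg c x)"
  unfolding internal_direct_sum_def graded_decomposition_def ..

lemma graded_decomposition_map:
  assumes "additive f" and grade: "\<And>g u. g \<in> Gam \<Longrightarrow> u \<in> Rg g \<Longrightarrow> f u \<in> Rg g"
    and dec: "graded_decomposition Gam Rg c x"
  shows "graded_decomposition Gam Rg (f \<circ> c) (f x)"
proof -
  interpret additive f by fact
  have sub: "{g. f (c g) \<noteq> 0} \<subseteq> {g. c g \<noteq> 0}" using zero by auto
  have fin: "finite {g. c g \<noteq> 0}" using dec unfolding graded_decomposition_def by blast
  have "f x = (\<Sum>g\<in>{g. c g \<noteq> 0}. f (c g))" using dec unfolding graded_decomposition_def by (simp add: sum)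
  also have "\<dots> = (\<Sum>g\<in>{g. f (c g) \<noteq> 0}. f (c g))" by (rule sum.mono_neutral_right[OF fin sub]) auto
  finally show ?thesis
    using dec grade finite_subset[OF sub fin] zero unfolding graded_decomposition_def by auto
qed

definition grading_support :: "'g set \<Rightarrow> ('g \<Rightarrow> 'r::zero set) \<Rightarrow> 'g set" where
  "grading_support Gam Rg = {g\<in>Gam. Rg g \<noteq> {0}}"

locale grid_graded_ring =
  fixes sm :: "'k::comm_ring_1 \<Rightarrow> 'r::ring_1 \<Rightarrow> 'r"
    and Gam :: "'g set" and e :: 'g and D :: "('g \<times> 'g) set" and op :: "'g \<Rightarrow> 'g \<Rightarrow> 'g"
    and Rg :: "'g \<Rightarrow> 'r set"
  assumes grading: "grid_grading sm Gam e D op Rg"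
begin

lemma grid: "grid Gam e D op"
  using grading unfolding grid_grading_def by blast

lemma one_mem: "e \<in> Gam"
  and defined_subset: "D \<subseteq> Gam \<times> Gam"
  and one_defined: "s \<in> Gam \<Longrightarrow> (e, s) \<in> D \<and> (s, e) \<in> D"
  and op_one_left [simp]: "s \<in> Gam \<Longrightarrow> op e s = s"
  and op_one_right [simp]: "s \<in> Gam \<Longrightarrow> op s e = s"
  and op_mem: "(a, b) \<in> D \<Longrightarrow> op a b \<in> Gam"
  and idempotent_eq_one: "s \<in> Gam \<Longrightarrow> (s, s) \<in> D \<Longrightarrow> op s s = s \<Longrightarrow> s = e"
  using grid unfolding grid_def by auto

lemma zero_mem_grade: "g \<in> Gam \<Longrightarrow> 0 \<in> Rg g"
  using grading unfolding grid_grading_def k_submodule_def by blast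

lemma grading_support_iff: "g \<in> grading_support Gam Rg \<longleftrightarrow> g \<in> Gam \<and> (\<exists>x\<in>Rg g. x \<noteq> 0)"
  unfolding grading_support_def using zero_mem_grade by blast

lemma one_mem_grade: "1 \<in> Rg e"
  using grading unfolding grid_grading_def by blast

lemma mult_nonzero_grade:
  assumes "g \<in> Gam" "h \<in> Gam" "a \<in> Rg g" "b \<in> Rg h" "a * b \<noteq> 0"
  shows "(g, h) \<in> D" "a * b \<in> Rg (op g h)"
  using grading assms unfolding grid_grading_def by blast+

lemma mult_mem_grade:
  assumes "(g, h) \<in> D" "a \<in> Rg g" "b \<in> Rg h"
  shows "a * b \<in> Rg (op g h)"
  using assms defined_subset mult_nonzero_grade zero_mem_grade[OF op_mem] by (cases "a * b = 0") auto

lemma mult_mem_grade_one_left: "h \<in> Gam \<Longrightarrow> z \<in> Rg e \<Longrightarrow> u \<in> Rg h \<Longrightarrow> z * u \<in> Rg h"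
  using mult_mem_grade one_defined by fastforce

lemma mult_mem_grade_one_right: "h \<in> Gam \<Longrightarrow> z \<in> Rg e \<Longrightarrow> u \<in> Rg h \<Longrightarrow> u * z \<in> Rg h"
  using mult_mem_grade one_defined by fastforce

lemma graded_decomposition_unique:
  "graded_decomposition Gam Rg c x \<Longrightarrow> graded_decomposition Gam Rg c' x \<Longrightarrow> c = c'"
  using grading unfolding grid_grading_def internal_direct_sum_iff by blast

lemma graded_decomposition_homogeneous:
  assumes "g \<in> Gam" "x \<in> Rg g"
  shows "graded_decomposition Gam Rg (\<lambda>h. if h = g then x else 0) x"
proof -
  have "{h. (if h = g then x else 0) \<noteq> 0} \<subseteq> {g}" by auto
  then show ?thesis
    using assms zero_mem_grade unfolding graded_decomposition_def
    by (auto simp: finite_subset sum.delta)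
qed

lemma grade_unique:
  assumes "x \<noteq> 0" "g \<in> Gam" "h \<in> Gam" "x \<in> Rg g" "x \<in> Rg h"
  shows "g = h"
  using graded_decomposition_unique[OF graded_decomposition_homogeneous[OF assms(2,4)]
      graded_decomposition_homogeneous[OF assms(3,5)]] assms(1)
  by (metis (mono_tags))

lemma grade_preserving_injective:
  assumes "additive f" and grade: "\<And>g u. g \<in> Gam \<Longrightarrow> u \<in> Rg g \<Longrightarrow> f u \<in> Rg g"
    and inj: "\<And>g u. g \<in> Gam \<Longrightarrow> u \<in> Rg g \<Longrightarrow> f u = 0 \<Longrightarrow> u = 0"
    and "f y = 0"
  shows "y = 0"
proof -
  obtain c where dec: "graded_decomposition Gam Rg c y"
    using grading unfolding grid_grading_def internal_direct_sum_iff by blast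
  have "graded_decomposition Gam Rg (\<lambda>_. 0) 0"
    using zero_mem_grade unfolding graded_decomposition_def by simp
  then have "f \<circ> c = (\<lambda>_. 0)"
    using graded_decomposition_unique graded_decomposition_map[OF assms(1), of Gam Rg, OF grade dec] \<open>f y = 0\<close> by metis
  then have "c = (\<lambda>_. 0)"
    using dec inj unfolding graded_decomposition_def by (metis comp_apply)
  then show ?thesis using dec unfolding graded_decomposition_def by simp
qed

end

locale reduced_grid_graded_ring = grid_graded_ring sm Gam e D op Rg
  for sm :: "'k::comm_ring_1 \<Rightarrow> 'r::ring_1 \<Rightarrow> 'r" and Gam e D op and Rg :: "'g \<Rightarrow> 'r set" +
  assumes reduced: "reduced TYPE('r)"
begin

lemma power_nonzero: "(x::'r) \<noteq> 0 \<Longrightarrow> x ^ n \<noteq> 0"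
  using reduced unfolding reduced_def by blast

lemma power_mem_grade:
  assumes "g \<in> Gam" "x \<in> Rg g" "x \<noteq> 0"
  shows "grid_pow op e g n \<in> Gam \<and> x ^ n \<in> Rg (grid_pow op e g n)"
proof (induction n)
  case 0
  show ?case using one_mem one_mem_grade by simp
next
  case (Suc n)
  have "x ^ n * x \<noteq> 0" using power_nonzero[OF assms(3), of "Suc n"] by (metis power_Suc2)
  then have "(grid_pow op e g n, g) \<in> D" "x ^ n * x \<in> Rg (op (grid_pow op e g n) g)"
    using mult_nonzero_grade[OF _ assms(1) _ assms(2)] Suc by blast+
  then show ?case using op_mem by (metis grid_pow.simps(2) power_Suc2)
qed

lemma grid_pow_mem_support:
  "g \<in> grading_support Gam Rg \<Longrightarrow> grid_pow op e g n \<in> grading_support Gam Rg"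
  using power_mem_grade power_nonzero unfolding grading_support_iff by blast

lemma grid_pow_add:
  assumes "g \<in> grading_support Gam Rg"
  shows "(grid_pow op e g a, grid_pow op e g b) \<in> D"
    and "grid_pow op e g (a + b) = op (grid_pow op e g a) (grid_pow op e g b)"
proof -
  obtain x where x: "g \<in> Gam" "x \<in> Rg g" "x \<noteq> 0" using assms grading_support_iff by blast
  have nonzero: "x ^ a * x ^ b \<noteq> 0" using power_nonzero[OF x(3), of "a + b"] by (simp add: power_add)
  show D: "(grid_pow op e g a, grid_pow op e g b) \<in> D"
    using mult_nonzero_grade(1)[OF _ _ _ _ nonzero] power_mem_grade[OF x] by blast
  have "x ^ (a + b) \<in> Rg (op (grid_pow op e g a) (grid_pow op e g b))"
    using mult_nonzero_grade(2)[OF _ _ _ _ nonzero] power_mem_grade[OF x] by (simp add: power_add)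
  then show "grid_pow op e g (a + b) = op (grid_pow op e g a) (grid_pow op e g b)"
    using grade_unique[OF power_nonzero[OF x(3)]] power_mem_grade[OF x] op_mem[OF D] by blast
qed

lemma grid_gen_singleton:
  assumes g: "g \<in> grading_support Gam Rg"
  shows "grid_gen Gam e D op {g} = range (grid_pow op e g)"
proof (rule grid_gen_eqI)
  have "range (grid_pow op e g) \<subseteq> Gam" using grid_pow_mem_support[OF g] grading_support_iff by blast
  then show "subgrid Gam e D op (range (grid_pow op e g))"
  proof (rule subgridI[OF grid])
    show "e \<in> range (grid_pow op e g)" by (metis grid_pow.simps(1) rangeI)
    fix u v assume "u \<in> range (grid_pow op e g)" "v \<in> range (grid_pow op e g)"
    then obtain a b where "u = grid_pow op e g a" "v = grid_pow op e g b" by blast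
    then show "op u v \<in> range (grid_pow op e g)" by (metis grid_pow_add(2)[OF g] rangeI)
  qed
  have "grid_pow op e g 1 = g" using g grading_support_iff by simp
  then show "{g} \<subseteq> range (grid_pow op e g)" by (metis empty_subsetI insert_subset rangeI)
  show "range (grid_pow op e g) \<subseteq> U" if U: "subgrid Gam e D op U" "{g} \<subseteq> U" for U
  proof -
    have "grid_pow op e g n \<in> U" for n
    proof (induction n)
      case (Suc n)
      have "(grid_pow op e g n, g) \<in> D" using grid_pow_add(1)[OF g, of n 1] g grading_support_iff by simp
      with Suc U show ?case using subgrid_closed by simp
    qed (use subgrid_one[OF U(1)] in simp)
    then show ?thesis by blast
  qed
qed

end

locale finite_reduced_grid_graded_ring = reduced_grid_graded_ring sm Gam e D op Rg
  for sm :: "'k::comm_ring_1 \<Rightarrow> 'r::ring_1 \<Rightarrow> 'r" and Gam e D op and Rg :: "'g \<Rightarrow> 'r set" +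
  assumes finite_support: "finite (grading_support Gam Rg)"
begin

lemma grid_pow_period:
  assumes g: "g \<in> grading_support Gam Rg"
  obtains m where "0 < m" "grid_pow op e g m = e"
proof -
  have "finite (range (grid_pow op e g))"
    using finite_subset[OF _ finite_support] grid_pow_mem_support[OF g] by blast
  then obtain m where "0 < m" and idem: "op (grid_pow op e g m) (grid_pow op e g m) = grid_pow op e g m"
    using finite_range_hom_idempotent[of "grid_pow op e g" op, OF grid_pow_add(2)[OF g]] by blast
  moreover have "grid_pow op e g m = e"
    using idempotent_eq_one[OF _ grid_pow_add(1)[OF g] idem] grid_pow_mem_support[OF g]
    unfolding grading_support_iff by blast
  ultimately show ?thesis using that by blast
qed

lemma grid_gen_singleton_finite_cyclic:
  assumes g: "g \<in> grading_support Gam Rg"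
  shows "grid_gen Gam e D op {g} \<subseteq> grading_support Gam Rg"
    and "finite_cyclic_grid_group e D op (grid_gen Gam e D op {g})"
proof -
  show "grid_gen Gam e D op {g} \<subseteq> grading_support Gam Rg"
    using grid_gen_singleton[OF g] grid_pow_mem_support[OF g] by auto
  then have "finite (range (grid_pow op e g))"
    using finite_subset[OF _ finite_support] grid_gen_singleton[OF g] by simp
  moreover obtain m where "0 < m" "grid_pow op e g m = e" using grid_pow_period[OF g] .
  moreover have "range (grid_pow op e g) \<times> range (grid_pow op e g) \<subseteq> D"
    using grid_pow_add(1)[OF g] by auto
  ultimately show "finite_cyclic_grid_group e D op (grid_gen Gam e D op {g})"
    unfolding grid_gen_singleton[OF g]
    by (intro finite_cyclic_grid_group_range[of "grid_pow op e g" op, OF grid_pow_add(2)[OF g]]) simp_all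
qed

lemma power_mem_grade_one:
  assumes "g \<in> Gam" "x \<in> Rg g" "x \<noteq> 0"
  obtains m where "0 < m" "x ^ m \<in> Rg e" "x ^ m \<noteq> 0" "grid_pow op e g m = e"
proof -
  have "g \<in> grading_support Gam Rg" using assms grading_support_iff by blast
  then obtain m where "0 < m" "grid_pow op e g m = e" using grid_pow_period by blast
  then show ?thesis using that power_mem_grade[OF assms] power_nonzero[OF assms(3)] by metis
qed

end

lemma field_sub_imp_domain_sub: "field_sub A \<Longrightarrow> domain_sub A"
  unfolding field_sub_def domain_sub_def
  by (metis mult.assoc mult_1 mult_zero_right)

locale domain_grid_graded_ring = finite_reduced_grid_graded_ring sm Gam e D op Rg
  for sm :: "'k::comm_ring_1 \<Rightarrow> 'r::ring_1 \<Rightarrow> 'r" and Gam e D op and Rg :: "'g \<Rightarrow> 'r set" +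
  assumes domain: "domain_sub (Rg e)"
begin

lemma mult_homogeneous_nonzero:
  assumes "g \<in> Gam" "x \<in> Rg g" "x \<noteq> 0" "h \<in> Gam" "y \<in> Rg h" "y \<noteq> 0"
  shows "x * y \<noteq> 0"
proof
  assume "x * y = 0"
  obtain m where m: "0 < m" "x ^ m \<in> Rg e" "x ^ m \<noteq> 0" using power_mem_grade_one[OF assms(1-3)] .
  obtain n where n: "0 < n" "y ^ n \<in> Rg e" "y ^ n \<noteq> 0" using power_mem_grade_one[OF assms(4-6)] .
  have "x ^ m * y ^ n = x ^ (m - 1) * (x * y) * y ^ (n - 1)"
    using m(1) n(1) power_Suc2[of x "m - 1"] power_Suc[of y "n - 1"] by (simp add: mult.assoc)
  also have "\<dots> = 0" using \<open>x * y = 0\<close> by simp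
  finally show False using domain m n unfolding domain_sub_def by blast
qed

lemma homogeneous_mult:
  assumes "g \<in> Gam" "x \<in> Rg g" "x \<noteq> 0" "h \<in> Gam" "y \<in> Rg h" "y \<noteq> 0"
  shows "(g, h) \<in> D" "op g h \<in> Gam" "x * y \<in> Rg (op g h)" "x * y \<noteq> 0"
  using mult_nonzero_grade[OF assms(1,4,2,5)] mult_homogeneous_nonzero[OF assms] op_mem by blast+

lemma grade_one_regular:
  assumes z: "z \<in> Rg e" "z \<noteq> 0" and "z * y = 0 \<or> y * z = 0"
  shows "y = 0"
proof -
  have homogeneous: "u = 0" if "g \<in> Gam" "u \<in> Rg g" "z * u = 0 \<or> u * z = 0" for g u
    using that mult_homogeneous_nonzero[OF one_mem z, of g u] mult_homogeneous_nonzero[of g u, OF _ _ _ one_mem z]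
    by blast
  from assms(3) show ?thesis
  proof
    assume "z * y = 0"
    moreover have "additive (\<lambda>u. z * u)" by unfold_locales (simp add: distrib_left)
    ultimately show ?thesis
      using grade_preserving_injective[of "\<lambda>u. z * u"] mult_mem_grade_one_left[OF _ z(1)] homogeneous
      by blast
  next
    assume "y * z = 0"
    moreover have "additive (\<lambda>u. u * z)" by unfold_locales (simp add: distrib_right)
    ultimately show ?thesis
      using grade_preserving_injective[of "\<lambda>u. u * z"] mult_mem_grade_one_right[OF _ z(1)] homogeneous
      by blast
  qed
qed

lemma homogeneous_regular:
  assumes "g \<in> Gam" "x \<in> Rg g" "x \<noteq> 0" and "x * y = 0 \<or> y * x = 0"
  shows "y = 0"
proof -
  obtain m where m: "0 < m" "x ^ m \<in> Rg e" "x ^ m \<noteq> 0" using power_mem_grade_one[OF assms(1-3)] .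
  then obtain k where "m = Suc k" using gr0_implies_Suc by blast
  then have "x ^ m * y = x ^ k * (x * y)" "y * x ^ m = (y * x) * x ^ k"
    by (simp only: power_Suc2 mult.assoc, simp only: power_Suc mult.assoc)
  then have "x ^ m * y = 0 \<or> y * x ^ m = 0" using assms(4) by auto
  then show ?thesis using grade_one_regular[OF m(2,3)] by blast
qed

lemma support_mult:
  assumes "g \<in> grading_support Gam Rg" "h \<in> grading_support Gam Rg"
  shows "(g, h) \<in> D" "op g h \<in> grading_support Gam Rg"
  using assms homogeneous_mult unfolding grading_support_iff by meson+

lemma support_assoc:
  assumes "g \<in> grading_support Gam Rg" "h \<in> grading_support Gam Rg" "k \<in> grading_support Gam Rg"
  shows "op (op g h) k = op g (op h k)"
proof -
  obtain x y z where x: "g \<in> Gam" "x \<in> Rg g" "x \<noteq> 0" and y: "h \<in> Gam" "y \<in> Rg h" "y \<noteq> 0"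
    and z: "k \<in> Gam" "z \<in> Rg k" "z \<noteq> 0"
    using assms unfolding grading_support_iff by blast
  note xy = homogeneous_mult[OF x y] and yz = homogeneous_mult[OF y z]
  note xy_z = homogeneous_mult[OF xy(2-4) z] and x_yz = homogeneous_mult[OF x yz(2-4)]
  show ?thesis using grade_unique[OF xy_z(4) xy_z(2) x_yz(2) xy_z(3)] x_yz(3) by (simp add: mult.assoc)
qed

lemma support_comm:
  assumes "\<And>a b :: 'r. a * b = b * a" "g \<in> grading_support Gam Rg" "h \<in> grading_support Gam Rg"
  shows "op g h = op h g"
proof -
  obtain x y where x: "g \<in> Gam" "x \<in> Rg g" "x \<noteq> 0" and y: "h \<in> Gam" "y \<in> Rg h" "y \<noteq> 0"
    using assms unfolding grading_support_iff by blast
  note xy = homogeneous_mult[OF x y] and yx = homogeneous_mult[OF y x]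
  show ?thesis using grade_unique[OF xy(4) xy(2) yx(2) xy(3)] yx(3) assms(1) by metis
qed

lemma one_mem_support: "e \<in> grading_support Gam Rg"
  using one_mem one_mem_grade domain unfolding grading_support_iff domain_sub_def by blast

lemma grid_group_support: "grid_group e D op (grading_support Gam Rg)"
  unfolding grid_group_def
proof
  show "grading_support Gam Rg \<times> grading_support Gam Rg \<subseteq> D" using support_mult(1) by blast
  show "group (grid_monoid e op (grading_support Gam Rg))"
  proof (rule grid_monoid_groupI)
    fix g assume g: "g \<in> grading_support Gam Rg"
    then show "op e g = g" using grading_support_iff by simp
    obtain m where "0 < m" "grid_pow op e g m = e" using grid_pow_period[OF g] .
    then obtain k where "op (grid_pow op e g k) g = e" by (metis gr0_implies_Suc grid_pow.simps(2))
    then show "\<exists>h\<in>grading_support Gam Rg. op h g = e" using grid_pow_mem_support[OF g] by blast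
  qed (fact support_mult(2) one_mem_support support_assoc)+
qed

lemma grid_gen_support: "grid_gen Gam e D op (grading_support Gam Rg) = grading_support Gam Rg"
proof (rule grid_gen_eqI)
  have "grading_support Gam Rg \<subseteq> Gam" by (simp add: grading_support_def)
  then show "subgrid Gam e D op (grading_support Gam Rg)"
    by (rule subgridI[OF grid _ one_mem_support support_mult(2)])
qed simp_all

lemma comm_group_support:
  assumes "\<And>a b :: 'r. a * b = b * a"
  shows "comm_group (grid_monoid e op (grading_support Gam Rg))"
proof -
  interpret group "grid_monoid e op (grading_support Gam Rg)"
    using grid_group_support unfolding grid_group_def by blast
  show ?thesis by (rule group_comm_groupI) (simp only: grid_monoid_simps support_comm[OF assms])
qed

end

locale field_grid_graded_ring = finite_reduced_grid_graded_ring sm Gam e D op Rg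
  for sm :: "'k::comm_ring_1 \<Rightarrow> 'r::ring_1 \<Rightarrow> 'r" and Gam e D op and Rg :: "'g \<Rightarrow> 'r set" +
  assumes field: "field_sub (Rg e)"

sublocale field_grid_graded_ring \<subseteq> domain_grid_graded_ring
  using field field_sub_imp_domain_sub by unfold_locales

context field_grid_graded_ring
begin

lemma inv_support_grid_pow:
  assumes g: "g \<in> grading_support Gam Rg" and period: "grid_pow op e g (Suc k) = e"
  shows "inv\<^bsub>grid_monoid e op (grading_support Gam Rg)\<^esub> g = grid_pow op e g k"
proof -
  interpret group "grid_monoid e op (grading_support Gam Rg)"
    using grid_group_support unfolding grid_group_def by blast
  show ?thesis by (rule inv_equality) (use g period grid_pow_mem_support[OF g] in simp_all)
qed

lemma homogeneous_invertible:
  assumes x: "g \<in> Gam" "x \<in> Rg g" "x \<noteq> 0"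
  shows "\<exists>y. x * y = 1 \<and> y * x = 1 \<and> y \<in> Rg (inv\<^bsub>grid_monoid e op (grading_support Gam Rg)\<^esub> g)"
proof -
  obtain m where m: "0 < m" "x ^ m \<in> Rg e" "x ^ m \<noteq> 0" "grid_pow op e g m = e"
    using power_mem_grade_one[OF x] .
  obtain c where c: "c \<in> Rg e" "x ^ m * c = 1" using field m(2,3) unfolding field_sub_def by blast
  obtain k where k: "m = Suc k" using m(1) gr0_implies_Suc by blast
  define y where "y = x ^ k * c"
  have right: "x * y = 1" using c(2) unfolding y_def k by (simp only: power_Suc mult.assoc)
  have "x * (y * x - 1) = 0" by (simp add: right_diff_distrib mult.assoc[symmetric] right)
  then have left: "y * x = 1" using homogeneous_regular[OF x, of "y * x - 1"] by simp
  have "y \<in> Rg (grid_pow op e g k)"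
    unfolding y_def using mult_mem_grade_one_right[OF _ c(1)] power_mem_grade[OF x] by blast
  moreover have "g \<in> grading_support Gam Rg" using x grading_support_iff by blast
  ultimately show ?thesis using right left inv_support_grid_pow m(4) unfolding k by auto
qed

lemma grade_free_rank_one:
  assumes g: "g \<in> grading_support Gam Rg"
  shows "\<exists>b\<in>Rg g. (\<forall>a\<in>Rg e. a * b = 0 \<longrightarrow> a = 0) \<and> (\<forall>x\<in>Rg g. \<exists>a\<in>Rg e. x = a * b)"
proof -
  let ?G = "grid_monoid e op (grading_support Gam Rg)"
  interpret group ?G
    using grid_group_support unfolding grid_group_def by blast
  obtain b where b: "g \<in> Gam" "b \<in> Rg g" "b \<noteq> 0" using g grading_support_iff by blast
  obtain b' where b': "b' * b = 1" "b' \<in> Rg (inv\<^bsub>?G\<^esub> g)" using homogeneous_invertible[OF b] by blast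
  have inv: "inv\<^bsub>?G\<^esub> g \<in> grading_support Gam Rg" "op g (inv\<^bsub>?G\<^esub> g) = e"
    using inv_closed[of g] r_inv[of g] g by simp_all
  have "x * b' \<in> Rg e" if "x \<in> Rg g" for x
    using mult_mem_grade[OF support_mult(1)[OF g inv(1)] that b'(2)] inv(2) by simp
  moreover have "x = (x * b') * b" for x using b'(1) by (simp add: mult.assoc)
  moreover have "\<forall>a\<in>Rg e. a * b = 0 \<longrightarrow> a = 0" using homogeneous_regular[OF b] by blast
  ultimately show ?thesis using b(2) by blast
qed

end

theorem mainTheorem4:
  fixes sm :: "'k::comm_ring_1 \<Rightarrow> 'r::ring_1 \<Rightarrow> 'r"
    and Gam :: "'g set" and e :: 'g and D :: "('g \<times> 'g) set" and op :: "'g \<Rightarrow> 'g \<Rightarrow> 'g"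
    and Rg :: "'g \<Rightarrow> 'r set"
  assumes alg: "k_algebra sm"
    and red: "reduced TYPE('r)"
    and grad: "grid_grading sm Gam e D op Rg"
    and fin: "finite {g\<in>Gam. Rg g \<noteq> {0}}"
  defines "X \<equiv> {g\<in>Gam. Rg g \<noteq> {0}}"
  shows
    "(\<forall>g\<in>X. grid_gen Gam e D op {g} \<subseteq> X \<and> finite_cyclic_grid_group e D op (grid_gen Gam e D op {g}))
     \<and> (domain_sub (Rg e) \<longrightarrow>
          (\<forall>g\<in>Gam. \<forall>x\<in>Rg g. x \<noteq> 0 \<longrightarrow> (\<forall>y. (x * y = 0 \<or> y * x = 0) \<longrightarrow> y = 0))
        \<and> grid_gen Gam e D op X = X \<and> grid_group e D op X
        \<and> ((\<forall>a b::'r. a * b = b * a) \<longrightarrow> comm_group (grid_monoid e op X)))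
     \<and> (field_sub (Rg e) \<longrightarrow>
          (\<forall>g\<in>Gam. \<forall>x\<in>Rg g. x \<noteq> 0 \<longrightarrow>
              (\<exists>y. x * y = 1 \<and> y * x = 1 \<and> y \<in> Rg (inv\<^bsub>grid_monoid e op X\<^esub> g)))
        \<and> (\<forall>g\<in>X. \<exists>b\<in>Rg g. (\<forall>a\<in>Rg e. a * b = 0 \<longrightarrow> a = 0) \<and> (\<forall>x\<in>Rg g. \<exists>a\<in>Rg e. x = a * b)))"
proof -
  interpret finite_reduced_grid_graded_ring sm Gam e D op Rg
    by unfold_locales (use red grad fin in \<open>simp_all add: grading_support_def\<close>)
  have domain: "domain_sub (Rg e) \<Longrightarrow> domain_grid_graded_ring sm Gam e D op Rg"
    and field: "field_sub (Rg e) \<Longrightarrow> field_grid_graded_ring sm Gam e D op Rg"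
    by unfold_locales
  have X: "X = grading_support Gam Rg" by (simp add: X_def grading_support_def)
  show ?thesis
    unfolding X
  proof (intro conjI impI ballI allI)
    fix g assume "g \<in> grading_support Gam Rg"
    then show "grid_gen Gam e D op {g} \<subseteq> grading_support Gam Rg"
      and "finite_cyclic_grid_group e D op (grid_gen Gam e D op {g})"
      by (rule grid_gen_singleton_finite_cyclic)+
  next
    assume "domain_sub (Rg e)"
    then interpret domain_grid_graded_ring sm Gam e D op Rg by (rule domain)
    show "y = 0" if "g \<in> Gam" "x \<in> Rg g" "x \<noteq> 0" "x * y = 0 \<or> y * x = 0" for g x y
      using homogeneous_regular that by blast
    show "grid_gen Gam e D op (grading_support Gam Rg) = grading_support Gam Rg"
      by (rule grid_gen_support)
    show "grid_group e D op (grading_support Gam Rg)" by (rule grid_group_support)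
    show "comm_group (grid_monoid e op (grading_support Gam Rg))" if "\<forall>a b :: 'r. a * b = b * a"
      using comm_group_support that by blast
  next
    assume "field_sub (Rg e)"
    then interpret field_grid_graded_ring sm Gam e D op Rg by (rule field)
    show "\<exists>y. x * y = 1 \<and> y * x = 1 \<and> y \<in> Rg (inv\<^bsub>grid_monoid e op (grading_support Gam Rg)\<^esub> g)"
      if "g \<in> Gam" "x \<in> Rg g" "x \<noteq> 0" for g x
      using homogeneous_invertible that by blast
    show "\<exists>b\<in>Rg g. (\<forall>a\<in>Rg e. a * b = 0 \<longrightarrow> a = 0) \<and> (\<forall>x\<in>Rg g. \<exists>a\<in>Rg e. x = a * b)"
      if "g \<in> grading_support Gam Rg" for g
      using grade_free_rank_one that by blast
  qed
qed

end
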